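(* Assume that $f$ is convex and $L$-smooth relative to $d$ on $Q$ for some $L>0$, that the Bregman divergence $V$ satisfies the triangular scaling property with scaling factor $\gamma=2$, and that for every $k\ge 0$ the pairs $(f_{\delta_k}(y),\nabla f_{\delta_k}(y))$ used by Algorithm AdapFGM are $(\delta_k,L)$-oracles of $f$ at every point $y\in Q$. Let $x_*$ be a minimizer of $f$ on $Q$, and let $R>0$ satisfy $V(x_*,x_0)\le R^2$. Then for every $N\ge 1$ the iterates of Algorithm AdapFGM (started with $L_0\in(0,2L)$) satisfy $$f(x_N)-f(x_* )\le \frac{8LR^2}{(N+1)^2}+\frac{2\sum_{k=0}^{N-1}A_{k+1}\delta_k}{A_N}.$$
   Context: Setting. $\mathbb{E}$ is a finite-dimensional real vector space with a norm $\|\cdot\|$ and dual space $\mathbb{E}^*$; $\langle g,x\rangle$ denotes the value of $g\in\mathbb{E}^*$ at $x\in\mathbb{E}$. $Q\subset\mathbb{E}$ is a closed convex set. $f:Q\to\mathbb{R}$ is convex and differentiable on an open set containing the relative interior $\mathrm{rint}\,Q$. The prox-function $d:Q\to\mathbb{R}$ is continuously differentiable and $1$-strongly convex with respect to $\|\cdot\|$. The Bregman divergence is $V(x,y)=d(x)-d(y)-\langle\nabla d(y),x-y\rangle$. All minimization subproblems appearing in the algorithms are assumed to have minimizers. Relative smoothness: $f$ is $L$-smooth relative to $d$ on $Q$ if $f(y)\le f(x)+\langle\nabla f(x),y-x\rangle+LV(y,x)$ for all $x\in\mathrm{rint}\,Q$, $y\in Q$. Triangular scaling property with factor $\gamma>0$: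 $V((1-\theta)x+\theta z,(1-\theta)x+\theta\tilde z)\le\theta^{\gamma}V(z,\tilde z)$ for all $x,z,\tilde z\in Q$ and all $\theta\in[0,1]$. $(\delta,L)$-oracle: a pair $(f_\delta(y),\nabla f_\delta(y))\in\mathbb{R}\times\mathbb{E}^*$ is a $(\delta,L)$-oracle of $f$ at $y$ if $0\le f(x)-\big(f_\delta(y)+\langle\nabla f_\delta(y),x-y\rangle\big)\le LV(x,y)+\delta$ for all $x\in Q$. Algorithm AdapFGM. Input: $x_0\in Q$, positive numbers $\{\delta_k\}_{k\ge0}$, and $L_0>0$. Set $y_0=u_0=x_0$, $\alpha_0=0$, $A_0=0$. For $k=0,1,2,\dots$: find the smallest integer $i_k\ge0$ such that, with $L_{k+1}=2^{i_k-1}L_k$, $\alpha_{k+1}$ the largest root of $A_k+\alpha=L_{k+1}\alpha^2$, $A_{k+1}=A_k+\alpha_{k+1}$ (so $A_{k+1}=L_{k+1}\alpha_{k+1}^2$), $y_{k+1}=\frac{\alpha_{k+1}u_k+A_kx_k}{A_{k+1}}$, $u_{k+1}=\arg\min_{x\in Q}\{\alpha_{k+1}\langle\nabla f_{\delta_k}(y_{k+1}),x-y_{k+1}\rangle+V(x,u_k)\}$, $x_{k+1}=\frac{\alpha_{k+1}u_{k+1}+A_kx_k}{A_{k+1}}$, the inequality $f_{\delta_k}(x_{k+1})\le f_{\delta_k}(y_{k+1})+\langle\nabla f_{\delta_k}(y_{k+1}),x_{k+1}-y_{k+1}\rangle+L_{k+1}V(x_{k+1},y_{k+1})+\delta_k$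 holds; these $L_{k+1},\alpha_{k+1},A_{k+1},y_{k+1},u_{k+1},x_{k+1}$ are the next iterates. *)

theory Defs
  imports "HOL-Analysis.Analysis"
begin

text \<open>The finite-dimensional space E is a type of class euclidean_space; its dual
is identified with E via the inner product, so a functional g acts as g \<bullet> x.
The norm of the paper is an arbitrary norm nrm (not necessarily the Euclidean one).\<close>

definition is_norm_fn :: "('a::real_vector \<Rightarrow> real) \<Rightarrow> bool" where
  "is_norm_fn nrm \<longleftrightarrow>
     (\<forall>x. 0 \<le> nrm x) \<and> (\<forall>x. nrm x = 0 \<longleftrightarrow> x = 0) \<and>
     (\<forall>c x. nrm (c *\<^sub>R x) = \<bar>c\<bar> * nrm x) \<and>
     (\<forall>x y. nrm (x + y) \<le> nrm x + nrm y)"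

definition strongly_convex_wrt :: "'a::real_vector set \<Rightarrow> ('a \<Rightarrow> real) \<Rightarrow> ('a \<Rightarrow> real) \<Rightarrow> bool" where
  "strongly_convex_wrt Q d nrm \<longleftrightarrow>
     (\<forall>x\<in>Q. \<forall>y\<in>Q. \<forall>t\<in>{0..1}.
        d ((1 - t) *\<^sub>R x + t *\<^sub>R y) \<le> (1 - t) * d x + t * d y - t * (1 - t) / 2 * (nrm (x - y))\<^sup>2)"

definition bregman :: "('a::real_inner \<Rightarrow> real) \<Rightarrow> ('a \<Rightarrow> 'a) \<Rightarrow> 'a \<Rightarrow> 'a \<Rightarrow> real" where
  "bregman d gd x y = d x - d y - gd y \<bullet> (x - y)"

definition rel_smooth :: "'a::euclidean_space set \<Rightarrow> ('a \<Rightarrow> real) \<Rightarrow> ('a \<Rightarrow> 'a) \<Rightarrow> ('a \<Rightarrow> real) \<Rightarrow> ('a \<Rightarrow> 'a) \<Rightarrow> real \<Rightarrow> bool" where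
  "rel_smooth Q f gf d gd L \<longleftrightarrow>
     (\<forall>x\<in>rel_interior Q. \<forall>y\<in>Q. f y \<le> f x + gf x \<bullet> (y - x) + L * bregman d gd y x)"

definition triangular_scaling :: "'a::real_inner set \<Rightarrow> ('a \<Rightarrow> real) \<Rightarrow> ('a \<Rightarrow> 'a) \<Rightarrow> real \<Rightarrow> bool" where
  "triangular_scaling Q d gd \<gamma> \<longleftrightarrow>
     (\<forall>x\<in>Q. \<forall>z\<in>Q. \<forall>z'\<in>Q. \<forall>\<theta>\<in>{0..1}.
        bregman d gd ((1 - \<theta>) *\<^sub>R x + \<theta> *\<^sub>R z) ((1 - \<theta>) *\<^sub>R x + \<theta> *\<^sub>R z')
          \<le> \<theta> powr \<gamma> * bregman d gd z z')"

definition is_dL_orc :: "'a::real_inner set \<Rightarrow> ('a \<Rightarrow> real) \<Rightarrow> ('a \<Rightarrow> 'a) \<Rightarrow>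
    real \<Rightarrow> real \<Rightarrow> ('a \<Rightarrow> real) \<Rightarrow> ('a \<Rightarrow> real) \<Rightarrow> ('a \<Rightarrow> 'a) \<Rightarrow> 'a \<Rightarrow> bool" where
  "is_dL_orc Q d gd \<delta> L f fd gdd y \<longleftrightarrow>
     (\<forall>x\<in>Q. 0 \<le> f x - (fd y + gdd y \<bullet> (x - y)) \<and>
             f x - (fd y + gdd y \<bullet> (x - y)) \<le> L * bregman d gd x y + \<delta>)"

definition adap_trial :: "'a::real_inner set \<Rightarrow> ('a \<Rightarrow> real) \<Rightarrow> ('a \<Rightarrow> 'a) \<Rightarrow>
    ('a \<Rightarrow> real) \<Rightarrow> ('a \<Rightarrow> 'a) \<Rightarrow> real \<Rightarrow>
    real \<Rightarrow> real \<Rightarrow> 'a \<Rightarrow> 'a \<Rightarrow> nat \<Rightarrow>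
    real \<Rightarrow> real \<Rightarrow> real \<Rightarrow> 'a \<Rightarrow> 'a \<Rightarrow> 'a \<Rightarrow> bool" where
  "adap_trial Q d gd fd gdd \<delta> Lk Ak xk uk i L' \<alpha>' A' y' u' x' \<longleftrightarrow>
     L' = 2 powr (real i - 1) * Lk \<and>
     Ak + \<alpha>' = L' * \<alpha>'\<^sup>2 \<and> (\<forall>\<beta>::real. Ak + \<beta> = L' * \<beta>\<^sup>2 \<longrightarrow> \<beta> \<le> \<alpha>') \<and>
     A' = Ak + \<alpha>' \<and>
     y' = (1 / A') *\<^sub>R (\<alpha>' *\<^sub>R uk + Ak *\<^sub>R xk) \<and>
     u' \<in> Q \<and>
     (\<forall>x\<in>Q. \<alpha>' * (gdd y' \<bullet> (u' - y')) + bregman d gd u' uk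
              \<le> \<alpha>' * (gdd y' \<bullet> (x - y')) + bregman d gd x uk) \<and>
     x' = (1 / A') *\<^sub>R (\<alpha>' *\<^sub>R u' + Ak *\<^sub>R xk) \<and>
     fd x' \<le> fd y' + gdd y' \<bullet> (x' - y') + L' * bregman d gd x' y' + \<delta>"

definition adapfgm_run :: "'a::real_inner set \<Rightarrow> ('a \<Rightarrow> real) \<Rightarrow> ('a \<Rightarrow> 'a) \<Rightarrow>
    (nat \<Rightarrow> 'a \<Rightarrow> real) \<Rightarrow> (nat \<Rightarrow> 'a \<Rightarrow> 'a) \<Rightarrow> (nat \<Rightarrow> real) \<Rightarrow> 'a \<Rightarrow> real \<Rightarrow>
    (nat \<Rightarrow> real) \<Rightarrow> (nat \<Rightarrow> real) \<Rightarrow> (nat \<Rightarrow> real) \<Rightarrow> (nat \<Rightarrow> 'a) \<Rightarrow> (nat \<Rightarrow> 'a) \<Rightarrow> (nat \<Rightarrow> 'a) \<Rightarrow>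
    (nat \<Rightarrow> nat) \<Rightarrow> bool" where
  "adapfgm_run Q d gd fd gdd \<delta> x0 L0 Ls \<alpha>s As ys us xs ik \<longleftrightarrow>
     Ls 0 = L0 \<and> \<alpha>s 0 = 0 \<and> As 0 = 0 \<and> ys 0 = x0 \<and> us 0 = x0 \<and> xs 0 = x0 \<and>
     (\<forall>k. adap_trial Q d gd (fd k) (gdd k) (\<delta> k) (Ls k) (As k) (xs k) (us k) (ik k)
             (Ls (Suc k)) (\<alpha>s (Suc k)) (As (Suc k)) (ys (Suc k)) (us (Suc k)) (xs (Suc k)) \<and>
          (\<forall>j < ik k. \<not> (\<exists>L' \<alpha>' A' y' u' x'.
             adap_trial Q d gd (fd k) (gdd k) (\<delta> k) (Ls k) (As k) (xs k) (us k) j L' \<alpha>' A' y' u' x')))"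

end

theory Submission
  imports Defs
begin

text \<open>The quantity \<open>A\<^sub>k (f x\<^sub>k - f x\<^sub>*) + V(x\<^sub>*, u\<^sub>k)\<close> increases by at most \<open>2 A\<^sub>k\<^sub>+\<^sub>1 \<delta>\<^sub>k\<close>
  per iteration. This follows from the three-point inequality of the Bregman prox step, the two
  sides of the inexact oracle, and triangular scaling: with \<open>\<gamma> = 2\<close> it bounds \<open>V(x\<^sub>k\<^sub>+\<^sub>1, y\<^sub>k\<^sub>+\<^sub>1)\<close>
  by \<open>(\<alpha>\<^sub>k\<^sub>+\<^sub>1/A\<^sub>k\<^sub>+\<^sub>1)\<^sup>2 V(u\<^sub>k\<^sub>+\<^sub>1, u\<^sub>k)\<close>, which the relation \<open>A\<^sub>k\<^sub>+\<^sub>1 = L\<^sub>k\<^sub>+\<^sub>1 \<alpha>\<^sub>k\<^sub>+\<^sub>1\<^sup>2\<close> cancels against the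
  three-point term. Since every constant \<open>L' \<ge> L\<close> passes the line search, the search stops
  before \<open>L\<^sub>k\<close> exceeds \<open>2L\<close>; then \<open>A\<^sub>k\<^sub>+\<^sub>1 = L\<^sub>k\<^sub>+\<^sub>1 (A\<^sub>k\<^sub>+\<^sub>1 - A\<^sub>k)\<^sup>2\<close> gives
  \<open>\<surd>A\<^sub>k\<^sub>+\<^sub>1 \<ge> \<surd>A\<^sub>k + 1/(2\<surd>(2L))\<close>, hence \<open>A\<^sub>N \<ge> (N+1)\<^sup>2/(8L)\<close>.\<close>

lemma difference_quotient_tendsto_directional_derivative:
  fixes Q :: "'a::euclidean_space set"
  assumes Q: "convex Q" and y: "y \<in> Q" and z: "z \<in> Q"
    and d_diff: "\<forall>x\<in>Q. (d has_derivative (\<lambda>h. gd x \<bullet> h)) (at x within Q)"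
  shows "((\<lambda>t. (d (y + t *\<^sub>R (z - y)) - d y) / t) \<longlongrightarrow> gd y \<bullet> (z - y)) (at_right 0)"
proof -
  let ?p = "\<lambda>t::real. y + t *\<^sub>R (z - y)"
  have segment: "?p ` {0..1} \<subseteq> Q"
  proof
    fix w assume "w \<in> ?p ` {0..1}"
    then obtain t where t: "t \<in> {0..1}" "w = ?p t" by auto
    have "w = (1 - t) *\<^sub>R y + t *\<^sub>R z" using t by (simp add: algebra_simps)
    then show "w \<in> Q" using Q y z t unfolding convex_alt by auto
  qed
  have path_deriv: "(?p has_derivative (\<lambda>t. t *\<^sub>R (z - y))) (at 0 within {0..1})"
    by (auto intro!: derivative_eq_intros)
  have "((\<lambda>t. d (?p t)) has_derivative (\<lambda>s. gd (?p 0) \<bullet> (s *\<^sub>R (z - y)))) (at 0 within {0..1})"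
    by (rule has_derivative_in_compose2[OF _ segment _ path_deriv]) (use d_diff in auto)
  then have "((\<lambda>t. d (?p t)) has_field_derivative (gd y \<bullet> (z - y))) (at 0 within {0..1})"
    unfolding has_field_derivative_def by (rule has_derivative_eq_rhs) (auto simp: fun_eq_iff)
  then show ?thesis
    unfolding has_field_derivative_iff at_within_Icc_at_right[of "0::real" 1, simplified]
    by simp
qed

lemma bregman_ge_half_sq_nrm:
  fixes Q :: "'a::euclidean_space set"
  assumes Q: "convex Q" and y: "y \<in> Q" and x: "x \<in> Q"
    and d_diff: "\<forall>x\<in>Q. (d has_derivative (\<lambda>h. gd x \<bullet> h)) (at x within Q)"
    and d_strong: "strongly_convex_wrt Q d nrm"
  shows "(nrm (y - x))\<^sup>2 / 2 \<le> bregman d gd x y"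
proof -
  let ?n = "(nrm (y - x))\<^sup>2"
  have quotient_le: "eventually (\<lambda>t. (d (y + t *\<^sub>R (x - y)) - d y) / t \<le> d x - d y - (1 - t) / 2 * ?n)
      (at_right (0::real))"
  proof (rule eventually_at_rightI[of 0 1])
    fix t :: real assume t: "t \<in> {0<..<1}"
    have "d ((1 - t) *\<^sub>R y + t *\<^sub>R x) \<le> (1 - t) * d y + t * d x - t * (1 - t) / 2 * ?n"
      using d_strong y x t unfolding strongly_convex_wrt_def by auto
    moreover have "(1 - t) *\<^sub>R y + t *\<^sub>R x = y + t *\<^sub>R (x - y)" by (simp add: algebra_simps)
    ultimately have "d (y + t *\<^sub>R (x - y)) - d y \<le> t * (d x - d y - (1 - t) / 2 * ?n)"
      by (simp add: algebra_simps)
    then show "(d (y + t *\<^sub>R (x - y)) - d y) / t \<le> d x - d y - (1 - t) / 2 * ?n"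
      using t by (simp add: divide_simps mult.commute)
  qed simp
  have bound_tendsto:
    "((\<lambda>t::real. d x - d y - (1 - t) / 2 * ?n) \<longlongrightarrow> d x - d y - (1 - 0) / 2 * ?n) (at_right 0)"
    by (intro tendsto_intros) auto
  have "gd y \<bullet> (x - y) \<le> d x - d y - (1 - 0) / 2 * ?n"
    by (rule tendsto_le[OF _ bound_tendsto
          difference_quotient_tendsto_directional_derivative[OF Q y x d_diff] quotient_le]) simp
  then show ?thesis unfolding bregman_def by simp
qed

lemma bregman_nonneg:
  fixes Q :: "'a::euclidean_space set"
  assumes "convex Q" "y \<in> Q" "x \<in> Q"
    and "\<forall>x\<in>Q. (d has_derivative (\<lambda>h. gd x \<bullet> h)) (at x within Q)"
    and "strongly_convex_wrt Q d nrm"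
  shows "0 \<le> bregman d gd x y"
  using bregman_ge_half_sq_nrm[OF assms] zero_le_power2[of "nrm (y - x)"] by linarith

lemma bregman_prox_three_point:
  fixes Q :: "'a::euclidean_space set"
  assumes Q: "convex Q" and u': "u' \<in> Q" and x: "x \<in> Q"
    and d_diff: "\<forall>x\<in>Q. (d has_derivative (\<lambda>h. gd x \<bullet> h)) (at x within Q)"
    and prox: "\<forall>x\<in>Q. a * (g \<bullet> (u' - y)) + bregman d gd u' u \<le> a * (g \<bullet> (x - y)) + bregman d gd x u"
  shows "a * (g \<bullet> (u' - x)) \<le> bregman d gd x u - bregman d gd x u' - bregman d gd u' u"
proof -
  let ?c = "a * (g \<bullet> (x - u')) - gd u \<bullet> (x - u')"
  let ?q = "\<lambda>t. ?c + (d (u' + t *\<^sub>R (x - u')) - d u') / t"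
  have q_tendsto: "(?q \<longlongrightarrow> ?c + gd u' \<bullet> (x - u')) (at_right 0)"
    by (intro tendsto_intros difference_quotient_tendsto_directional_derivative[OF Q u' x d_diff])
  have q_nonneg: "eventually (\<lambda>t. 0 \<le> ?q t) (at_right (0::real))"
  proof (rule eventually_at_rightI[of 0 1])
    fix t :: real assume t: "t \<in> {0<..<1}"
    let ?z = "u' + t *\<^sub>R (x - u')"
    have "?z = (1 - t) *\<^sub>R u' + t *\<^sub>R x" by (simp add: algebra_simps)
    then have "?z \<in> Q" using Q u' x t unfolding convex_alt by auto
    then have "a * (g \<bullet> (u' - y)) + bregman d gd u' u \<le> a * (g \<bullet> (?z - y)) + bregman d gd ?z u"
      using prox by blast
    then have "0 \<le> t * ?c + (d ?z - d u')"
      unfolding bregman_def by (simp add: algebra_simps inner_diff_right inner_add_right)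
    then have "0 \<le> (t * ?c + (d ?z - d u')) / t"
      using t by simp
    also have "\<dots> = ?q t" using t by (simp add: add_divide_distrib)
    finally show "0 \<le> ?q t" .
  qed simp
  have "0 \<le> ?c + gd u' \<bullet> (x - u')"
    by (rule tendsto_lowerbound[OF q_tendsto q_nonneg]) simp
  then show ?thesis unfolding bregman_def
    by (simp add: algebra_simps inner_diff_right inner_diff_left)
qed

lemma is_norm_fn_sum_le:
  assumes nrm: "is_norm_fn nrm" and "finite B"
  shows "nrm (\<Sum>b\<in>B. f b) \<le> (\<Sum>b\<in>B. nrm (f b))"
  using \<open>finite B\<close>
proof (induction B rule: finite_induct)
  case empty
  then show ?case using nrm unfolding is_norm_fn_def by (metis order_refl sum.empty)
next
  case (insert b B)
  have "nrm (f b + sum f B) \<le> nrm (f b) + nrm (sum f B)"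
    using nrm unfolding is_norm_fn_def by blast
  then show ?case using insert by simp
qed

lemma is_norm_fn_le_norm:
  fixes nrm :: "'a::euclidean_space \<Rightarrow> real"
  assumes nrm: "is_norm_fn nrm"
  obtains M where "0 \<le> M" "\<And>x. nrm x \<le> M * norm x"
proof
  have hom: "\<And>c x. nrm (c *\<^sub>R x) = \<bar>c\<bar> * nrm x" and pos: "\<And>x. 0 \<le> nrm x"
    using nrm unfolding is_norm_fn_def by auto
  show "0 \<le> (\<Sum>b\<in>Basis. nrm b)" by (simp add: pos sum_nonneg)
  fix x :: 'a
  have "nrm x = nrm (\<Sum>b\<in>Basis. (x \<bullet> b) *\<^sub>R b)" by (simp add: euclidean_representation)
  also have "\<dots> \<le> (\<Sum>b\<in>Basis. nrm ((x \<bullet> b) *\<^sub>R b))" by (rule is_norm_fn_sum_le[OF nrm]) simp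
  also have "\<dots> = (\<Sum>b\<in>Basis. \<bar>x \<bullet> b\<bar> * nrm b)" by (simp add: hom)
  also have "\<dots> \<le> (\<Sum>b\<in>Basis. norm x * nrm b)"
    by (intro sum_mono mult_right_mono) (auto simp: Basis_le_norm pos)
  also have "\<dots> = (\<Sum>b\<in>Basis. nrm b) * norm x" by (simp add: sum_distrib_left mult.commute)
  finally show "nrm x \<le> (\<Sum>b\<in>Basis. nrm b) * norm x" .
qed

lemma is_norm_fn_continuous:
  fixes nrm :: "'a::euclidean_space \<Rightarrow> real"
  assumes nrm: "is_norm_fn nrm"
  shows "continuous_on S nrm"
proof -
  have hom: "\<And>c x. nrm (c *\<^sub>R x) = \<bar>c\<bar> * nrm x" and tri: "\<And>x y. nrm (x + y) \<le> nrm x + nrm y"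
    using nrm unfolding is_norm_fn_def by auto
  obtain M where M: "0 \<le> M" "\<And>x. nrm x \<le> M * norm x" using is_norm_fn_le_norm[OF nrm] by blast
  have "nrm (x - y) = nrm (y - x)" for x y
    using hom[of "-1" "x - y"] by simp
  moreover have "nrm x \<le> nrm (x - y) + nrm y" for x y using tri[of "x - y" y] by simp
  ultimately have "dist (nrm x) (nrm y) \<le> nrm (x - y)" for x y
    unfolding dist_real_def by (smt (verit))
  then have "M-lipschitz_on S nrm"
    using M by (intro lipschitz_onI) (auto simp: dist_norm intro: order_trans)
  then show ?thesis by (rule lipschitz_on_continuous_on)
qed

lemma is_norm_fn_ge_norm:
  fixes nrm :: "'a::euclidean_space \<Rightarrow> real"
  assumes nrm: "is_norm_fn nrm"
  obtains c where "0 < c" "\<And>x. c * norm x \<le> nrm x"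
proof -
  have hom: "\<And>c x. nrm (c *\<^sub>R x) = \<bar>c\<bar> * nrm x" and pos: "\<And>x. 0 \<le> nrm x"
    and zero: "\<And>x. nrm x = 0 \<longleftrightarrow> x = 0"
    using nrm unfolding is_norm_fn_def by auto
  obtain b :: 'a where "b \<in> Basis" using nonempty_Basis by blast
  then have "sphere (0::'a) 1 \<noteq> {}" by (auto intro!: exI[of _ b])
  then obtain e where e: "e \<in> sphere 0 1" "\<And>y. y \<in> sphere 0 1 \<Longrightarrow> nrm e \<le> nrm y"
    using continuous_attains_inf[OF compact_sphere _ is_norm_fn_continuous[OF nrm]] by blast
  have "e \<noteq> 0" using e by auto
  then have "0 < nrm e" using pos[of e] zero[of e] by linarith
  moreover have "nrm e * norm x \<le> nrm x" for x
  proof (cases "x = 0")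
    case True then show ?thesis using pos by simp
  next
    case False
    then have "nrm e \<le> nrm ((1 / norm x) *\<^sub>R x)" by (intro e(2)) simp
    also have "\<dots> = nrm x / norm x" by (simp add: hom)
    finally show ?thesis using False by (simp add: field_simps)
  qed
  ultimately show thesis by (rule that)
qed

lemma bregman_prox_sublevel_bounded:
  fixes Q :: "'a::euclidean_space set"
  assumes Q: "convex Q" and u: "u \<in> Q" and x: "x \<in> Q"
    and d_diff: "\<forall>x\<in>Q. (d has_derivative (\<lambda>h. gd x \<bullet> h)) (at x within Q)"
    and d_strong: "strongly_convex_wrt Q d nrm"
    and c: "0 < c" "\<And>z. c * norm z \<le> nrm z"
    and sublevel: "a * (g \<bullet> (x - y)) + bregman d gd x u \<le> a * (g \<bullet> (u - y)) + bregman d gd u u"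
  shows "norm (x - u) \<le> 2 * \<bar>a\<bar> * norm g / c\<^sup>2"
proof -
  let ?n = "norm (x - u)"
  have "c * ?n \<le> nrm (u - x)" using c(2)[of "u - x"] by (simp add: norm_minus_commute)
  then have "(c * ?n)\<^sup>2 \<le> (nrm (u - x))\<^sup>2" using c by (simp add: power_mono)
  then have V: "c\<^sup>2 * ?n\<^sup>2 / 2 \<le> bregman d gd x u"
    using bregman_ge_half_sq_nrm[OF Q u x d_diff d_strong] by (simp add: power_mult_distrib)
  have "a * (g \<bullet> (x - u)) + bregman d gd x u \<le> 0"
    using sublevel unfolding bregman_def by (simp add: inner_diff_right algebra_simps)
  moreover have "\<bar>a * (g \<bullet> (x - u))\<bar> \<le> \<bar>a\<bar> * norm g * ?n"
    unfolding abs_mult mult.assoc by (intro mult_left_mono Cauchy_Schwarz_ineq2) auto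
  ultimately have "?n * (c\<^sup>2 * ?n) \<le> ?n * (2 * \<bar>a\<bar> * norm g)"
    using V by (simp add: power2_eq_square algebra_simps)
  then have "?n = 0 \<or> c\<^sup>2 * ?n \<le> 2 * \<bar>a\<bar> * norm g"
    by (metis mult_le_cancel_left norm_ge_zero order_less_le)
  then show ?thesis
  proof
    assume "c\<^sup>2 * ?n \<le> 2 * \<bar>a\<bar> * norm g"
    then show ?thesis using c by (simp add: field_simps)
  qed simp
qed

text \<open>The paper assumes the prox subproblems are solvable. Here solvability is derived from
  strong convexity; it is needed to see that the line search succeeds once \<open>L\<^sub>k\<^sub>+\<^sub>1 \<ge> L\<close>.\<close>

lemma bregman_prox_exists:
  fixes Q :: "'a::euclidean_space set"
  assumes closed: "closed Q" and Q: "convex Q" and u: "u \<in> Q"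
    and d_diff: "\<forall>x\<in>Q. (d has_derivative (\<lambda>h. gd x \<bullet> h)) (at x within Q)"
    and d_strong: "strongly_convex_wrt Q d nrm" and nrm: "is_norm_fn nrm"
  obtains u' where "u' \<in> Q"
    "\<forall>x\<in>Q. a * (g \<bullet> (u' - y)) + bregman d gd u' u \<le> a * (g \<bullet> (x - y)) + bregman d gd x u"
proof -
  define \<phi> where "\<phi> x = a * (g \<bullet> (x - y)) + bregman d gd x u" for x
  obtain c where c: "0 < c" "\<And>z. c * norm z \<le> nrm z" using is_norm_fn_ge_norm[OF nrm] by blast
  define r where "r = 2 * \<bar>a\<bar> * norm g / c\<^sup>2"
  have bounded: "x \<in> cball u r" if "x \<in> Q" "\<phi> x \<le> \<phi> u" for x
    using bregman_prox_sublevel_bounded[OF Q u _ d_diff d_strong c, of x] that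
    unfolding \<phi>_def r_def by (simp add: dist_norm norm_minus_commute)
  have "continuous_on Q d"
    unfolding continuous_on_eq_continuous_within using d_diff has_derivative_continuous by blast
  then have "continuous_on Q \<phi>"
    unfolding \<phi>_def bregman_def by (intro continuous_intros)
  then have "continuous_on (Q \<inter> cball u r) \<phi>"
    by (rule continuous_on_subset) blast
  moreover have "compact (Q \<inter> cball u r)" using closed by (intro closed_Int_compact) auto
  moreover have u_in: "u \<in> Q \<inter> cball u r" using u bounded[OF u] by simp
  ultimately obtain m where m: "m \<in> Q \<inter> cball u r" "\<And>x. x \<in> Q \<inter> cball u r \<Longrightarrow> \<phi> m \<le> \<phi> x"
    using continuous_attains_inf[of "Q \<inter> cball u r" \<phi>] by blast
  have "\<phi> m \<le> \<phi> x" if x: "x \<in> Q" for x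
  proof (cases "\<phi> x \<le> \<phi> u")
    case True
    then show ?thesis using m(2) bounded[OF x] x by blast
  next
    case False
    then show ?thesis using m(2)[OF u_in] by linarith
  qed
  then show thesis using m(1) by (intro that[of m]) (auto simp: \<phi>_def)
qed

lemma step_equation_root:
  fixes L A :: real
  assumes L: "0 < L" and A: "0 \<le> A"
  defines "b \<equiv> (1 + sqrt (1 + 4 * L * A)) / (2 * L)"
  shows "A + b = L * b\<^sup>2" "0 < b" "\<forall>\<beta>. A + \<beta> = L * \<beta>\<^sup>2 \<longrightarrow> \<beta> \<le> b"
proof -
  define s where "s = sqrt (1 + 4 * L * A)"
  have s2: "s\<^sup>2 = 1 + 4 * L * A" and s1: "1 \<le> s" unfolding s_def using L A by simp_all
  have b: "b = (1 + s) / (2 * L)" unfolding b_def s_def ..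
  show root: "A + b = L * b\<^sup>2" unfolding b using L s2 by (simp add: field_simps power2_eq_square)
  show "0 < b" unfolding b using L s1 by simp
  have "1 / L \<le> b" unfolding b using L s1 by (simp add: field_simps)
  show "\<forall>\<beta>. A + \<beta> = L * \<beta>\<^sup>2 \<longrightarrow> \<beta> \<le> b"
  proof (intro allI impI)
    fix \<beta> assume \<beta>: "A + \<beta> = L * \<beta>\<^sup>2"
    have "(\<beta> - b) * (L * (\<beta> + b) - 1) = 0"
      using \<beta> root by (simp add: algebra_simps power2_eq_square)
    then have "\<beta> = b \<or> L * (\<beta> + b) = 1" by simp
    then have "\<beta> = b \<or> \<beta> = 1 / L - b" using L by (auto simp: field_simps)
    then show "\<beta> \<le> b" using \<open>1 / L \<le> b\<close> \<open>0 < b\<close> by auto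
  qed
qed

lemma weighted_mean_eq_convex_comb:
  fixes x u :: "'a::real_vector"
  assumes "0 \<le> A" "0 < \<alpha>"
  shows "(1 / (A + \<alpha>)) *\<^sub>R (\<alpha> *\<^sub>R u + A *\<^sub>R x) = (1 - \<alpha> / (A + \<alpha>)) *\<^sub>R x + (\<alpha> / (A + \<alpha>)) *\<^sub>R u"
proof -
  have "1 - \<alpha> / (A + \<alpha>) = A / (A + \<alpha>)" using assms by (simp add: field_simps)
  then show ?thesis by (simp add: scaleR_add_right add.commute)
qed

lemma weighted_mean_in_convex:
  fixes Q :: "'a::real_vector set"
  assumes "convex Q" "0 \<le> A" "0 < \<alpha>" "x \<in> Q" "u \<in> Q"
  shows "(1 / (A + \<alpha>)) *\<^sub>R (\<alpha> *\<^sub>R u + A *\<^sub>R x) \<in> Q"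
proof -
  have "0 \<le> \<alpha> / (A + \<alpha>)" "\<alpha> / (A + \<alpha>) \<le> 1" using assms by auto
  then show ?thesis
    unfolding weighted_mean_eq_convex_comb[OF assms(2,3)] using assms unfolding convex_alt by blast
qed

lemma estimate_sequence_step:
  fixes x u u' z y x' g :: "'a::real_inner"
  assumes A: "0 \<le> A" and \<alpha>: "0 < \<alpha>" and A': "A' = A + \<alpha>" and A'_eq: "A' = L' * \<alpha>\<^sup>2" and L': "0 < L'"
    and y: "y = (1 / A') *\<^sub>R (\<alpha> *\<^sub>R u + A *\<^sub>R x)"
    and x': "x' = (1 / A') *\<^sub>R (\<alpha> *\<^sub>R u' + A *\<^sub>R x)"
    and three_point: "\<alpha> * (g \<bullet> (u' - z)) \<le> V_zu - V_zu' - V_u'u"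
    and line_search: "fd_x' \<le> fd_y + g \<bullet> (x' - y) + L' * V_x'y + \<delta>"
    and upper_x': "f_x' \<le> fd_x' + \<delta>"
    and lower_x: "fd_y + g \<bullet> (x - y) \<le> f_x" and lower_z: "fd_y + g \<bullet> (z - y) \<le> f_z"
    and scaling: "V_x'y \<le> (\<alpha> / A')\<^sup>2 * V_u'u"
  shows "A' * f_x' \<le> A * f_x + \<alpha> * f_z + V_zu - V_zu' + 2 * A' * \<delta>"
proof -
  have A'_pos: "0 < A'" using A \<alpha> A' by simp
  have Ay: "A' *\<^sub>R y = \<alpha> *\<^sub>R u + A *\<^sub>R x" and Ax': "A' *\<^sub>R x' = \<alpha> *\<^sub>R u' + A *\<^sub>R x"
    using y x' A'_pos by simp_all
  have step_x': "A' * (g \<bullet> (x' - y)) = \<alpha> * (g \<bullet> (u' - u))"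
  proof -
    have "A' * (g \<bullet> (x' - y)) = g \<bullet> (A' *\<^sub>R x' - A' *\<^sub>R y)" by (simp add: algebra_simps)
    also have "\<dots> = g \<bullet> (\<alpha> *\<^sub>R (u' - u))" unfolding Ax' Ay by (simp add: algebra_simps)
    finally show ?thesis by simp
  qed
  have step_y: "\<alpha> * (g \<bullet> (y - u)) = A * (g \<bullet> (x - y))"
  proof -
    have "\<alpha> *\<^sub>R y + A *\<^sub>R y = \<alpha> *\<^sub>R u + A *\<^sub>R x" using Ay A' by (simp add: scaleR_add_left add.commute)
    then have "\<alpha> *\<^sub>R (y - u) = A *\<^sub>R (x - y)" by (simp add: algebra_simps)
    then show ?thesis by (metis inner_scaleR_right)
  qed
  have "\<alpha> * (g \<bullet> (u' - u)) = \<alpha> * (g \<bullet> (u' - z)) + \<alpha> * (g \<bullet> (z - y)) + \<alpha> * (g \<bullet> (y - u))"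
    by (simp add: algebra_simps inner_diff_right)
  moreover have "A' * (L' * V_x'y) \<le> V_u'u"
  proof -
    have "A' * (L' * V_x'y) \<le> A' * (L' * ((\<alpha> / A')\<^sup>2 * V_u'u))"
      using scaling A'_pos L' by (simp add: mult_left_mono)
    also have "\<dots> = V_u'u" using A'_pos A'_eq L' \<alpha> by (simp add: field_simps power2_eq_square)
    finally show ?thesis .
  qed
  moreover have "A' * f_x' \<le> A' * (fd_y + g \<bullet> (x' - y) + L' * V_x'y + 2 * \<delta>)"
    using line_search upper_x' A'_pos by (intro mult_left_mono) auto
  moreover have "A * (fd_y + g \<bullet> (x - y)) \<le> A * f_x" using lower_x A by (simp add: mult_left_mono)
  moreover have "\<alpha> * (fd_y + g \<bullet> (z - y)) \<le> \<alpha> * f_z" using lower_z \<alpha> by (simp add: mult_left_mono)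
  ultimately show ?thesis
    using A' step_x' step_y three_point by (simp add: algebra_simps)
qed

lemma sqrt_increment_ge:
  fixes a b l M :: real
  assumes a: "0 \<le> a" and l: "0 < l" "l \<le> M" and b: "b = l * (b - a)\<^sup>2" and ab: "a < b"
  shows "sqrt a + 1 / (2 * sqrt M) \<le> sqrt b"
proof -
  have sqrt_b: "sqrt b = sqrt l * (b - a)"
    using arg_cong[where f = sqrt, OF b] ab by (simp add: real_sqrt_mult)
  have "sqrt a \<le> sqrt b" "0 < sqrt b" using a ab by auto
  have "sqrt b / sqrt l = b - a" using sqrt_b l by simp
  also have "\<dots> = (sqrt b - sqrt a) * (sqrt b + sqrt a)"
    using a ab by (simp add: algebra_simps)
  also have "\<dots> \<le> (sqrt b - sqrt a) * (2 * sqrt b)"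
    using \<open>sqrt a \<le> sqrt b\<close> by (intro mult_left_mono) auto
  finally have "sqrt b * (1 / sqrt l) \<le> sqrt b * (2 * (sqrt b - sqrt a))"
    by (simp add: algebra_simps)
  then have "1 / sqrt l \<le> 2 * (sqrt b - sqrt a)"
    using \<open>0 < sqrt b\<close> by (rule mult_left_le_imp_le)
  then have "1 / (2 * sqrt l) \<le> sqrt b - sqrt a" by (simp add: field_simps)
  moreover have "1 / (2 * sqrt M) \<le> 1 / (2 * sqrt l)" using l by (simp add: frac_le)
  ultimately show ?thesis by simp
qed

lemma adap_trial_basic:
  fixes Q :: "'a::euclidean_space set"
  assumes Q: "convex Q" and A: "0 \<le> A" and Lk: "0 < Lk" and x: "x \<in> Q" and u: "u \<in> Q"
    and trial: "adap_trial Q d gd fd gdd \<delta> Lk A x u i L' \<alpha>' A' y' u' x'"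
  shows "0 < L'" "0 < \<alpha>'" "A' = A + \<alpha>'" "A' = L' * \<alpha>'\<^sup>2" "y' \<in> Q" "u' \<in> Q" "x' \<in> Q"
proof -
  have L': "L' = 2 powr (real i - 1) * Lk" and root: "A + \<alpha>' = L' * \<alpha>'\<^sup>2"
    and largest: "\<forall>\<beta>. A + \<beta> = L' * \<beta>\<^sup>2 \<longrightarrow> \<beta> \<le> \<alpha>'"
    and A': "A' = A + \<alpha>'" and y': "y' = (1 / A') *\<^sub>R (\<alpha>' *\<^sub>R u + A *\<^sub>R x)" and u': "u' \<in> Q"
    and x': "x' = (1 / A') *\<^sub>R (\<alpha>' *\<^sub>R u' + A *\<^sub>R x)"
    using trial unfolding adap_trial_def by auto
  show L'_pos: "0 < L'" using L' Lk by simp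
  show \<alpha>': "0 < \<alpha>'"
    using step_equation_root[OF L'_pos A] largest by (meson order_less_le_trans)
  show "A' = A + \<alpha>'" "A' = L' * \<alpha>'\<^sup>2" "u' \<in> Q" using A' root u' by simp_all
  show "y' \<in> Q" "x' \<in> Q"
    unfolding y' x' A' using weighted_mean_in_convex[OF Q A \<alpha>'] x u u' by simp_all
qed

lemma adap_trial_succeeds:
  fixes Q :: "'a::euclidean_space set"
  assumes closed: "closed Q" and Q: "convex Q" and A: "0 \<le> A" and Lk: "0 < Lk"
    and x: "x \<in> Q" and u: "u \<in> Q"
    and d_diff: "\<forall>x\<in>Q. (d has_derivative (\<lambda>h. gd x \<bullet> h)) (at x within Q)"
    and d_strong: "strongly_convex_wrt Q d nrm" and nrm: "is_norm_fn nrm"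
    and orc: "\<forall>y\<in>Q. is_dL_orc Q d gd \<delta> L f fd gdd y"
    and large: "L \<le> 2 powr (real i - 1) * Lk"
  shows "\<exists>L' \<alpha>' A' y' u' x'. adap_trial Q d gd fd gdd \<delta> Lk A x u i L' \<alpha>' A' y' u' x'"
proof -
  define L' where "L' = 2 powr (real i - 1) * Lk"
  have L'_pos: "0 < L'" unfolding L'_def using Lk by simp
  define \<alpha>' where "\<alpha>' = (1 + sqrt (1 + 4 * L' * A)) / (2 * L')"
  note root = step_equation_root[OF L'_pos A, folded \<alpha>'_def]
  define A' where "A' = A + \<alpha>'"
  define y' where "y' = (1 / A') *\<^sub>R (\<alpha>' *\<^sub>R u + A *\<^sub>R x)"
  have y'_in: "y' \<in> Q" unfolding y'_def A'_def by (rule weighted_mean_in_convex[OF Q A root(2) x u])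
  obtain u' where u': "u' \<in> Q" "\<forall>z\<in>Q. \<alpha>' * (gdd y' \<bullet> (u' - y')) + bregman d gd u' u
      \<le> \<alpha>' * (gdd y' \<bullet> (z - y')) + bregman d gd z u"
    using bregman_prox_exists[OF closed Q u d_diff d_strong nrm] by blast
  define x' where "x' = (1 / A') *\<^sub>R (\<alpha>' *\<^sub>R u' + A *\<^sub>R x)"
  have x'_in: "x' \<in> Q" unfolding x'_def A'_def by (rule weighted_mean_in_convex[OF Q A root(2) x u'(1)])
  have "fd x' \<le> f x'"
    using orc x'_in unfolding is_dL_orc_def by (metis diff_ge_0_iff_ge diff_self inner_zero_right add_0_right)
  moreover have "f x' \<le> fd y' + gdd y' \<bullet> (x' - y') + L * bregman d gd x' y' + \<delta>"
    using orc x'_in y'_in unfolding is_dL_orc_def by fastforce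
  moreover have "L * bregman d gd x' y' \<le> L' * bregman d gd x' y'"
    using large bregman_nonneg[OF Q y'_in x'_in d_diff d_strong]
    unfolding L'_def by (simp add: mult_right_mono)
  ultimately have "fd x' \<le> fd y' + gdd y' \<bullet> (x' - y') + L' * bregman d gd x' y' + \<delta>" by linarith
  then have "adap_trial Q d gd fd gdd \<delta> Lk A x u i L' \<alpha>' A' y' u' x'"
    unfolding adap_trial_def
    by (intro conjI L'_def root(1) root(3) A'_def y'_def u'(1) x'_def u'(2))
  then show ?thesis by blast
qed

text \<open>Convexity and relative smoothness of \<open>f\<close> are not assumed here: the two sides of the
  \<open>(\<delta>,L)\<close>-oracle inequality are all the argument uses of \<open>f\<close>.\<close>

locale adapfgm =
  fixes Q :: "'a::euclidean_space set" and nrm :: "'a \<Rightarrow> real"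
    and d :: "'a \<Rightarrow> real" and gd :: "'a \<Rightarrow> 'a" and f :: "'a \<Rightarrow> real"
    and fd :: "nat \<Rightarrow> 'a \<Rightarrow> real" and gdd :: "nat \<Rightarrow> 'a \<Rightarrow> 'a" and \<delta> :: "nat \<Rightarrow> real"
    and L L0 :: real and x0 :: 'a
    and Ls \<alpha>s As :: "nat \<Rightarrow> real" and ys us xs :: "nat \<Rightarrow> 'a" and ik :: "nat \<Rightarrow> nat"
  assumes nrm: "is_norm_fn nrm"
    and closed: "closed Q" and convex: "convex Q"
    and d_diff: "\<forall>x\<in>Q. (d has_derivative (\<lambda>h. gd x \<bullet> h)) (at x within Q)"
    and d_strong: "strongly_convex_wrt Q d nrm"
    and scaling: "triangular_scaling Q d gd 2"
    and orc: "\<forall>k. \<forall>y\<in>Q. is_dL_orc Q d gd (\<delta> k) L f (fd k) (gdd k) y"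
    and L_pos: "0 < L" and L0: "0 < L0" "L0 \<le> 2 * L"
    and x0: "x0 \<in> Q"
    and run: "adapfgm_run Q d gd fd gdd \<delta> x0 L0 Ls \<alpha>s As ys us xs ik"
begin

lemma initial: "Ls 0 = L0" "As 0 = 0" "us 0 = x0" "xs 0 = x0"
  using run unfolding adapfgm_run_def by auto

lemma trial:
  "adap_trial Q d gd (fd k) (gdd k) (\<delta> k) (Ls k) (As k) (xs k) (us k) (ik k)
     (Ls (Suc k)) (\<alpha>s (Suc k)) (As (Suc k)) (ys (Suc k)) (us (Suc k)) (xs (Suc k))"
  using run unfolding adapfgm_run_def by blast

lemma earlier_trials_fail:
  "j < ik k \<Longrightarrow> \<not> (\<exists>L' \<alpha>' A' y' u' x'.
     adap_trial Q d gd (fd k) (gdd k) (\<delta> k) (Ls k) (As k) (xs k) (us k) j L' \<alpha>' A' y' u' x')"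
  using run unfolding adapfgm_run_def by blast

lemma Ls_Suc_le:
  assumes "0 \<le> As k" "0 < Ls k" "Ls k \<le> 2 * L" "xs k \<in> Q" "us k \<in> Q"
  shows "Ls (Suc k) \<le> 2 * L"
proof (cases "ik k")
  case 0
  have "Ls (Suc k) = 2 powr (- 1) * Ls k" using trial[of k] 0 unfolding adap_trial_def by simp
  then show ?thesis using assms L_pos by (simp add: powr_minus_divide)
next
  case (Suc j)
  have "Ls (Suc k) = 2 powr (real j) * Ls k" using trial[of k] Suc unfolding adap_trial_def by simp
  also have "\<dots> = 2 * (2 powr (real j - 1) * Ls k)" by (simp add: powr_diff)
  finally have Ls_Suc: "Ls (Suc k) = 2 * (2 powr (real j - 1) * Ls k)" .
  have "j < ik k" using Suc by simp
  then have "2 powr (real j - 1) * Ls k < L"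
    using earlier_trials_fail[of j k] orc
      adap_trial_succeeds[OF closed convex assms(1,2,4,5) d_diff d_strong nrm]
    by (meson not_le)
  then show ?thesis using Ls_Suc by simp
qed

lemma iterate_bounds: "0 \<le> As k \<and> 0 < Ls k \<and> Ls k \<le> 2 * L \<and> xs k \<in> Q \<and> us k \<in> Q"
proof (induction k)
  case 0
  show ?case using initial x0 L0 by simp
next
  case (Suc k)
  then show ?case
    using adap_trial_basic[OF convex _ _ _ _ trial[of k]] Ls_Suc_le[of k] by auto
qed

lemma step_facts:
  "0 < \<alpha>s (Suc k)" "As (Suc k) = As k + \<alpha>s (Suc k)" "As (Suc k) = Ls (Suc k) * (\<alpha>s (Suc k))\<^sup>2"
  "ys (Suc k) \<in> Q"
  using adap_trial_basic[OF convex _ _ _ _ trial[of k]] iterate_bounds[of k] by auto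

lemma potential_step:
  assumes xstar: "xstar \<in> Q"
  shows "As (Suc k) * f (xs (Suc k)) \<le> As k * f (xs k) + \<alpha>s (Suc k) * f xstar
           + bregman d gd xstar (us k) - bregman d gd xstar (us (Suc k)) + 2 * As (Suc k) * \<delta> k"
proof -
  let ?A = "As k" and ?\<alpha> = "\<alpha>s (Suc k)" and ?A' = "As (Suc k)"
    and ?x = "xs k" and ?u = "us k" and ?u' = "us (Suc k)" and ?y = "ys (Suc k)"
    and ?x' = "xs (Suc k)" and ?g = "gdd k (ys (Suc k))"
  have A: "0 \<le> ?A" and x: "?x \<in> Q" and u: "?u \<in> Q" and u': "?u' \<in> Q" and x': "?x' \<in> Q"
    using iterate_bounds[of k] iterate_bounds[of "Suc k"] by auto
  have y: "?y = (1 / ?A') *\<^sub>R (?\<alpha> *\<^sub>R ?u + ?A *\<^sub>R ?x)"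
    and x'_eq: "?x' = (1 / ?A') *\<^sub>R (?\<alpha> *\<^sub>R ?u' + ?A *\<^sub>R ?x)"
    and prox: "\<forall>z\<in>Q. ?\<alpha> * (?g \<bullet> (?u' - ?y)) + bregman d gd ?u' ?u
                  \<le> ?\<alpha> * (?g \<bullet> (z - ?y)) + bregman d gd z ?u"
    and line_search: "fd k ?x' \<le> fd k ?y + ?g \<bullet> (?x' - ?y) + Ls (Suc k) * bregman d gd ?x' ?y + \<delta> k"
    using trial[of k] unfolding adap_trial_def by blast+
  have orc_k: "\<forall>y\<in>Q. is_dL_orc Q d gd (\<delta> k) L f (fd k) (gdd k) y" using orc by blast
  have "f ?x' \<le> fd k ?x' + \<delta> k"
    using orc_k x' unfolding is_dL_orc_def bregman_def by fastforce
  moreover have "fd k ?y + ?g \<bullet> (?x - ?y) \<le> f ?x" "fd k ?y + ?g \<bullet> (xstar - ?y) \<le> f xstar"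
    using orc_k x xstar step_facts(4)[of k] unfolding is_dL_orc_def by fastforce+
  moreover have "bregman d gd ?x' ?y \<le> (?\<alpha> / ?A')\<^sup>2 * bregman d gd ?u' ?u"
  proof -
    have \<theta>: "0 \<le> ?\<alpha> / ?A'" "?\<alpha> / ?A' \<le> 1" using step_facts(1,2)[of k] A by auto
    have "?x' = (1 - ?\<alpha> / ?A') *\<^sub>R ?x + (?\<alpha> / ?A') *\<^sub>R ?u'"
      "?y = (1 - ?\<alpha> / ?A') *\<^sub>R ?x + (?\<alpha> / ?A') *\<^sub>R ?u"
      unfolding x'_eq y step_facts(2)[of k]
      by (simp_all only: weighted_mean_eq_convex_comb[OF A step_facts(1)[of k]])
    then show ?thesis
      using scaling x u u' \<theta> unfolding triangular_scaling_def by simp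
  qed
  ultimately have "?A' * f ?x' \<le> ?A * f ?x + ?\<alpha> * f xstar + bregman d gd xstar ?u
      - bregman d gd xstar ?u' + 2 * ?A' * \<delta> k"
    using estimate_sequence_step[OF A step_facts(1,2,3) iterate_bounds[THEN conjunct2, THEN conjunct1]
        y x'_eq bregman_prox_three_point[OF convex u' xstar d_diff prox] line_search]
    by blast
  then show ?thesis by simp
qed

lemma potential_bound:
  assumes xstar: "xstar \<in> Q"
  shows "As N * (f (xs N) - f xstar) + bregman d gd xstar (us N)
           \<le> bregman d gd xstar x0 + 2 * (\<Sum>k<N. As (Suc k) * \<delta> k)"
proof (induction N)
  case 0
  show ?case using initial by simp
next
  case (Suc k)
  then show ?case
    using potential_step[OF xstar, of k] step_facts(2)[of k] by (simp add: algebra_simps)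
qed

lemma sqrt_As_lower_bound:
  assumes "1 \<le> N"
  shows "(real N + 1) / (2 * sqrt (2 * L)) \<le> sqrt (As N)"
  using assms
proof (induction N rule: nat_induct_at_least)
  case base
  have A1: "As 1 = \<alpha>s 1" using step_facts(2)[of 0] initial by simp
  then have "\<alpha>s 1 = Ls 1 * (\<alpha>s 1)\<^sup>2" using step_facts(3)[of 0] by simp
  then have "1 = Ls 1 * \<alpha>s 1" using step_facts(1)[of 0] by (simp add: power2_eq_square)
  then have "As 1 = 1 / Ls 1" using A1 iterate_bounds[of 1] by (simp add: field_simps)
  moreover have "1 / (2 * L) \<le> 1 / Ls 1" using iterate_bounds[of 1] by (simp add: frac_le)
  ultimately have "sqrt (1 / (2 * L)) \<le> sqrt (As 1)" by simp
  moreover have "sqrt (1 / (2 * L)) = (real 1 + 1) / (2 * sqrt (2 * L))"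
    using L_pos by (simp add: real_sqrt_divide field_simps)
  ultimately show ?case by simp
next
  case (Suc n)
  have "sqrt (As n) + 1 / (2 * sqrt (2 * L)) \<le> sqrt (As (Suc n))"
    using sqrt_increment_ge[of "As n" "Ls (Suc n)" "2 * L" "As (Suc n)"] iterate_bounds step_facts
    by simp
  then show ?case using Suc.IH by (simp add: add_divide_distrib)
qed

lemma As_lower_bound:
  assumes "1 \<le> N"
  shows "(real N + 1)\<^sup>2 / (8 * L) \<le> As N"
proof -
  have "((real N + 1) / (2 * sqrt (2 * L)))\<^sup>2 \<le> (sqrt (As N))\<^sup>2"
    using sqrt_As_lower_bound[OF assms] L_pos by (intro power_mono) auto
  then show ?thesis
    using iterate_bounds[of N] L_pos by (simp add: power_divide power_mult_distrib)
qed

lemma excess_bound: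
  assumes xstar: "xstar \<in> Q" and R: "bregman d gd xstar x0 \<le> R\<^sup>2" and N: "1 \<le> N"
  shows "f (xs N) - f xstar \<le> 8 * L * R\<^sup>2 / (real N + 1)\<^sup>2 + 2 * (\<Sum>k<N. As (Suc k) * \<delta> k) / As N"
proof -
  let ?S = "\<Sum>k<N. As (Suc k) * \<delta> k"
  have A_lower: "(real N + 1)\<^sup>2 / (8 * L) \<le> As N" by (rule As_lower_bound[OF N])
  moreover have "0 < (real N + 1)\<^sup>2 / (8 * L)" using L_pos by simp
  ultimately have A_pos: "0 < As N" by linarith
  have "As N * (f (xs N) - f xstar) \<le> R\<^sup>2 + 2 * ?S"
    using potential_bound[OF xstar, of N] R
      bregman_nonneg[OF convex _ xstar d_diff d_strong, of "us N"] iterate_bounds[of N]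
    by linarith
  then have "f (xs N) - f xstar \<le> R\<^sup>2 / As N + 2 * ?S / As N"
    using A_pos by (simp add: field_simps)
  also have "R\<^sup>2 / As N \<le> R\<^sup>2 / ((real N + 1)\<^sup>2 / (8 * L))"
    using A_lower L_pos A_pos by (intro divide_left_mono) auto
  finally show ?thesis by (simp add: ac_simps)
qed

end

theorem theorem1:
  fixes Q :: "'a::euclidean_space set"
    and nrm :: "'a \<Rightarrow> real"
    and f :: "'a \<Rightarrow> real" and gf :: "'a \<Rightarrow> 'a"
    and d :: "'a \<Rightarrow> real" and gd :: "'a \<Rightarrow> 'a"
    and fd :: "nat \<Rightarrow> 'a \<Rightarrow> real" and gdd :: "nat \<Rightarrow> 'a \<Rightarrow> 'a"
    and \<delta> :: "nat \<Rightarrow> real"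
    and x0 xstar :: 'a and L L0 R :: real
    and Ls \<alpha>s As :: "nat \<Rightarrow> real" and ys us xs :: "nat \<Rightarrow> 'a" and ik :: "nat \<Rightarrow> nat"
  assumes norm: "is_norm_fn nrm"
    and Q: "closed Q" "convex Q"
    and f_convex: "convex_on Q f"
    and f_diff: "\<exists>U. open U \<and> rel_interior Q \<subseteq> U \<and>
                   (\<forall>x\<in>U. (f has_derivative (\<lambda>h. gf x \<bullet> h)) (at x))"
    and d_diff: "\<forall>x\<in>Q. (d has_derivative (\<lambda>h. gd x \<bullet> h)) (at x within Q)"
    and d_cont: "continuous_on Q gd"
    and d_strong: "strongly_convex_wrt Q d nrm"
    and L_pos: "L > 0"
    and smooth: "rel_smooth Q f gf d gd L"
    and tsp: "triangular_scaling Q d gd 2"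
    and orc: "\<forall>k. \<forall>y\<in>Q. is_dL_orc Q d gd (\<delta> k) L f (fd k) (gdd k) y"
    and \<delta>_pos: "\<forall>k. \<delta> k > 0"
    and x0: "x0 \<in> Q"
    and xstar: "xstar \<in> Q" "\<forall>x\<in>Q. f xstar \<le> f x"
    and R: "R > 0" "bregman d gd xstar x0 \<le> R\<^sup>2"
    and L0: "0 < L0" "L0 < 2 * L"
    and run: "adapfgm_run Q d gd fd gdd \<delta> x0 L0 Ls \<alpha>s As ys us xs ik"
  shows "\<forall>N\<ge>1. f (xs N) - f xstar
           \<le> 8 * L * R\<^sup>2 / (real N + 1)\<^sup>2 + 2 * (\<Sum>k<N. As (Suc k) * \<delta> k) / As N"
proof -
  interpret adapfgm Q nrm d gd f fd gdd \<delta> L L0 x0 Ls \<alpha>s As ys us xs ik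
    using assms by unfold_locales auto
  show ?thesis using excess_bound[OF xstar(1) R(2)] by blast
qed

end
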